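(* Let $v=(x,y,z)^T\in\mathbb{O}^3$ with $\operatorname{Re}(x)=\operatorname{Re}(y)=\operatorname{Re}(z)=0$ and associator $[v]:=[x,y,z]\neq0$. Then the set of $3\times3$ Hermitian octonionic matrices $A$ satisfying $Av=v[v]$ is nonempty and forms a 6-parameter family: identifying such $A$ with $(p,m,n,a,b,c)\in\mathbb{R}^3\times\mathbb{O}^3\cong\mathbb{R}^{27}$, the solution set is a real affine subspace of dimension $6$. Specifically, in a basis where $x=x_2 i$, $y=y_2 i+y_3 j$, $z=z_2 i+z_3 j+z_4 k+z_8\ell$, the diagonal entries $p,m,n$ and the components $b_1,b_4,b_7$ of $b$ (coefficients of $1,k,i\ell$) may be chosen freely, and the remaining entries of $A$ are then uniquely determined.
   Context: $\mathbb{O}$ denotes the real octonions, constructed by Cayley–Dickson as $\mathbb{H}\oplus\mathbb{H}\ell$ with basis $1,i,j,k,k\ell,j\ell,i\ell,\ell$; octonions are written $w=w_1+w_2 i+w_3 j+w_4 k+w_5 k\ell+w_6 j\ell+w_7 i\ell+w_8\ell$, and $\operatorname{Re}(w)=w_1$. The associator is $[x,y,z]=(xy)z-x(yz)$. Any triple of octonions can be put in the "generic" form $x=x_1+x_2 i$, $y=y_1+y_2 i+y_3 j$, $z=z_1+z_2 i+z_3 j+z_4 k+z_8\ell$ by a suitable choice of basis; then $[x,y,z]=2x_2y_3z_8\,k\ell$. A $3\times3$ Hermitian octonionic matrix has the form $A=\begin{pmatrix} p & a & \bar c\\ \bar a & m & b\\ c & \bar b & n\end{pmatrix}$ with $p,m,n\in\mathbb{R}$,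 $a,b,c\in\mathbb{O}$. $Av=v[v]$ means $px+ay+\bar c z = x[v]$, $\bar a x+my+bz=y[v]$, $cx+\bar b y+nz=z[v]$ (octonionic products). *)

theory Defs
  imports "HOL-Analysis.Analysis"
begin

text \<open>Basis labels of the octonions, in the order 1,i,j,k,kl,jl,il,l
  (coordinates w1,...,w8 of the paper).\<close>
datatype ob = E1 | Ei | Ej | Ek | Ekl | Ejl | Eil | El

lemma UNIV_ob: "(UNIV :: ob set) = {E1, Ei, Ej, Ek, Ekl, Ejl, Eil, El}"
  by (auto intro: ob.exhaust)

instance ob :: finite
  by standard (simp add: UNIV_ob)

type_synonym oct = "real ^ ob"

datatype quat = Q real real real real

fun qmul :: "quat \<Rightarrow> quat \<Rightarrow> quat" where
  "qmul (Q a1 a2 a3 a4) (Q b1 b2 b3 b4) =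
     Q (a1*b1 - a2*b2 - a3*b3 - a4*b4)
       (a1*b2 + a2*b1 + a3*b4 - a4*b3)
       (a1*b3 - a2*b4 + a3*b1 + a4*b2)
       (a1*b4 + a2*b3 - a3*b2 + a4*b1)"

fun qadd :: "quat \<Rightarrow> quat \<Rightarrow> quat" where
  "qadd (Q a1 a2 a3 a4) (Q b1 b2 b3 b4) = Q (a1+b1) (a2+b2) (a3+b3) (a4+b4)"

fun qsub :: "quat \<Rightarrow> quat \<Rightarrow> quat" where
  "qsub (Q a1 a2 a3 a4) (Q b1 b2 b3 b4) = Q (a1-b1) (a2-b2) (a3-b3) (a4-b4)"

fun qcnj :: "quat \<Rightarrow> quat" where
  "qcnj (Q a1 a2 a3 a4) = Q a1 (-a2) (-a3) (-a4)"

text \<open>w = q1 + q2 l with q1 = w1 + w2 i + w3 j + w4 k and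
  q2 = w8 + w7 i + w6 j + w5 k (so that q2 l has kl-coefficient w5, jl w6, il w7, l w8).\<close>
definition ohead :: "oct \<Rightarrow> quat" where
  "ohead w = Q (w $ E1) (w $ Ei) (w $ Ej) (w $ Ek)"

definition otail :: "oct \<Rightarrow> quat" where
  "otail w = Q (w $ El) (w $ Eil) (w $ Ejl) (w $ Ekl)"

fun ojoin :: "quat \<Rightarrow> quat \<Rightarrow> oct" where
  "ojoin (Q a1 a2 a3 a4) (Q b1 b2 b3 b4) =
     (\<chi> e. case e of E1 \<Rightarrow> a1 | Ei \<Rightarrow> a2 | Ej \<Rightarrow> a3 | Ek \<Rightarrow> a4
                   | El \<Rightarrow> b1 | Eil \<Rightarrow> b2 | Ejl \<Rightarrow> b3 | Ekl \<Rightarrow> b4)"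

text \<open>Cayley-Dickson product (a + b l)(c + d l) = (ac - conj(d) b) + (da + b conj(c)) l.
  With this convention [i,j,l] = 2 kl, matching the paper's formula.\<close>
definition omul :: "oct \<Rightarrow> oct \<Rightarrow> oct" where
  "omul x y = ojoin
     (qsub (qmul (ohead x) (ohead y)) (qmul (qcnj (otail y)) (otail x)))
     (qadd (qmul (otail y) (ohead x)) (qmul (otail x) (qcnj (ohead y))))"

definition ocnj :: "oct \<Rightarrow> oct" where
  "ocnj w = (\<chi> e. if e = E1 then w $ E1 else - (w $ e))"

definition ore :: "oct \<Rightarrow> real" where
  "ore w = w $ E1"

definition assoc :: "oct \<Rightarrow> oct \<Rightarrow> oct \<Rightarrow> oct" where
  "assoc x y z = omul (omul x y) z - omul x (omul y z)"

text \<open>A Hermitian matrix [[p,a,conj c],[conj a,m,b],[c,conj b,n]] is identified with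
  (p,m,n,a,b,c) in R^3 x O^3 (= R^27).  The equation A v = v [v] for v = (x,y,z).\<close>
definition eigen_eq :: "real \<times> real \<times> real \<times> oct \<times> oct \<times> oct \<Rightarrow> oct \<Rightarrow> oct \<Rightarrow> oct \<Rightarrow> bool" where
  "eigen_eq A x y z = (case A of (p, m, n, a, b, c) \<Rightarrow>
      (let r = assoc x y z in
        p *\<^sub>R x + omul a y + omul (ocnj c) z = omul x r \<and>
        omul (ocnj a) x + m *\<^sub>R y + omul b z = omul y r \<and>
        omul c x + omul (ocnj b) y + n *\<^sub>R z = omul z r))"

definition hsol :: "oct \<Rightarrow> oct \<Rightarrow> oct \<Rightarrow> (real \<times> real \<times> real \<times> oct \<times> oct \<times> oct) set" where
  "hsol x y z = {A. eigen_eq A x y z}"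

end

theory Submission
  imports Defs
begin

text \<open>Octonion automorphisms preserve the equation \<open>Av = v[v]\<close>, and the automorphisms
  \<open>a + b\<ell> \<mapsto> q a q\<^sup>* + (r b q\<^sup>*)\<ell>\<close> (\<open>q, r\<close> unit quaternions) together with the cyclic
  permutation \<open>i \<mapsto> j \<mapsto> \<ell> \<mapsto> i\<close> move any imaginary triple into the generic form, so only
  generic triples need to be treated. For \<open>x \<noteq> 0\<close> the second and third rows of \<open>Av = v[v]\<close>
  determine \<open>a\<close> and \<open>c\<close> from \<open>b, m, n\<close>, because \<open>(u x) x\<^sup>* = |x|\<^sup>2 u\<close>. Substituting them,
  the first row of a generic triple (where \<open>x\<^sub>2 y\<^sub>3 z\<^sub>8 \<noteq> 0\<close>) becomes five independent linear
  equations: they fix \<open>b\<^sub>5\<close> and \<open>b\<^sub>8\<close>, fix \<open>b\<^sub>3\<close> in terms of \<open>b\<^sub>7\<close>, and form a 2\<open>\<times>\<close>2 system for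
  \<open>(b\<^sub>2, b\<^sub>6)\<close> with determinant \<open>z\<^sub>4\<^sup>2 + z\<^sub>8\<^sup>2\<close>.\<close>

section \<open>Octonions in coordinates\<close>

lemma all_ob: "(\<forall>e::ob. P e) \<longleftrightarrow> P E1 \<and> P Ei \<and> P Ej \<and> P Ek \<and> P Ekl \<and> P Ejl \<and> P Eil \<and> P El"
  by (metis ob.exhaust)

lemma oct_eq_iff:
  "(u::oct) = v \<longleftrightarrow> u$E1 = v$E1 \<and> u$Ei = v$Ei \<and> u$Ej = v$Ej \<and> u$Ek = v$Ek \<and>
     u$Ekl = v$Ekl \<and> u$Ejl = v$Ejl \<and> u$Eil = v$Eil \<and> u$El = v$El"
  by (simp add: vec_eq_iff all_ob)

lemma omul_nth:
  "omul x y $ E1 = x$E1*y$E1 - x$Ei*y$Ei - x$Eil*y$Eil - x$Ej*y$Ej - x$Ejl*y$Ejl - x$Ek*y$Ek - x$Ekl*y$Ekl - x$El*y$El"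
  "omul x y $ Ei = x$E1*y$Ei + x$Ei*y$E1 - x$Eil*y$El + x$Ej*y$Ek - x$Ejl*y$Ekl - x$Ek*y$Ej + x$Ekl*y$Ejl + x$El*y$Eil"
  "omul x y $ Ej = x$E1*y$Ej - x$Ei*y$Ek + x$Eil*y$Ekl + x$Ej*y$E1 - x$Ejl*y$El + x$Ek*y$Ei - x$Ekl*y$Eil + x$El*y$Ejl"
  "omul x y $ Ek = x$E1*y$Ek + x$Ei*y$Ej - x$Eil*y$Ejl - x$Ej*y$Ei + x$Ejl*y$Eil + x$Ek*y$E1 - x$Ekl*y$El + x$El*y$Ekl"
  "omul x y $ Ekl = x$E1*y$Ekl - x$Ei*y$Ejl - x$Eil*y$Ej + x$Ej*y$Eil + x$Ejl*y$Ei + x$Ek*y$El + x$Ekl*y$E1 - x$El*y$Ek"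
  "omul x y $ Ejl = x$E1*y$Ejl + x$Ei*y$Ekl + x$Eil*y$Ek + x$Ej*y$El + x$Ejl*y$E1 - x$Ek*y$Eil - x$Ekl*y$Ei - x$El*y$Ej"
  "omul x y $ Eil = x$E1*y$Eil + x$Ei*y$El + x$Eil*y$E1 - x$Ej*y$Ekl - x$Ejl*y$Ek + x$Ek*y$Ejl + x$Ekl*y$Ej - x$El*y$Ei"
  "omul x y $ El = x$E1*y$El - x$Ei*y$Eil + x$Eil*y$Ei - x$Ej*y$Ejl + x$Ejl*y$Ej - x$Ek*y$Ekl + x$Ekl*y$Ek + x$El*y$E1"
  by (simp_all add: omul_def ohead_def otail_def algebra_simps)

lemma ocnj_nth:
  "ocnj w $ E1 = w $ E1" "ocnj w $ Ei = - w $ Ei" "ocnj w $ Ej = - w $ Ej" "ocnj w $ Ek = - w $ Ek"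
  "ocnj w $ Ekl = - w $ Ekl" "ocnj w $ Ejl = - w $ Ejl" "ocnj w $ Eil = - w $ Eil" "ocnj w $ El = - w $ El"
  by (simp_all add: ocnj_def)

lemma inner_oct:
  "(u::oct) \<bullet> v = u$E1 * v$E1 + u$Ei * v$Ei + u$Ej * v$Ej + u$Ek * v$Ek +
     u$Ekl * v$Ekl + u$Ejl * v$Ejl + u$Eil * v$Eil + u$El * v$El"
  by (simp add: inner_vec_def UNIV_ob)

lemma omul_add_left: "omul (a + b) c = omul a c + omul b c"
  by (simp add: oct_eq_iff omul_nth algebra_simps)

lemma omul_scaleR_left: "omul (r *\<^sub>R a) c = r *\<^sub>R omul a c"
  by (simp add: oct_eq_iff omul_nth algebra_simps)

lemma ocnj_add: "ocnj (a + b) = ocnj a + ocnj b"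
  by (simp add: oct_eq_iff ocnj_nth)

lemma ocnj_scaleR: "ocnj (r *\<^sub>R a) = r *\<^sub>R ocnj a"
  by (simp add: oct_eq_iff ocnj_nth)

lemma ocnj_ocnj [simp]: "ocnj (ocnj a) = a"
  by (simp add: oct_eq_iff ocnj_nth)

lemma omul_omul_ocnj: "omul (omul u x) (ocnj x) = (x \<bullet> x) *\<^sub>R u"
  by (simp add: oct_eq_iff omul_nth ocnj_nth inner_oct algebra_simps)

lemma omul_ocnj_omul: "omul (omul u (ocnj x)) x = (x \<bullet> x) *\<^sub>R u"
  by (simp add: oct_eq_iff omul_nth ocnj_nth inner_oct algebra_simps)

lemma omul_right_eq_iff:
  assumes "x \<noteq> 0"
  shows "omul u x = w \<longleftrightarrow> u = (1 / (x \<bullet> x)) *\<^sub>R omul w (ocnj x)"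
proof -
  have N: "x \<bullet> x \<noteq> 0" using assms by simp
  show ?thesis
  proof
    assume "omul u x = w"
    then show "u = (1 / (x \<bullet> x)) *\<^sub>R omul w (ocnj x)" using N by (auto simp: omul_omul_ocnj)
  next
    assume "u = (1 / (x \<bullet> x)) *\<^sub>R omul w (ocnj x)"
    then show "omul u x = w" using N by (simp add: omul_scaleR_left omul_ocnj_omul)
  qed
qed

section \<open>Eliminating \<open>a\<close> and \<open>c\<close>\<close>

definition forced_a :: "real \<Rightarrow> oct \<Rightarrow> oct \<Rightarrow> oct \<Rightarrow> oct \<Rightarrow> oct" where
  "forced_a m b x y z =
     (1 / (x \<bullet> x)) *\<^sub>R ocnj (omul (omul y (assoc x y z) - m *\<^sub>R y - omul b z) (ocnj x))"

definition forced_c :: "real \<Rightarrow> oct \<Rightarrow> oct \<Rightarrow> oct \<Rightarrow> oct \<Rightarrow> oct" where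
  "forced_c n b x y z =
     (1 / (x \<bullet> x)) *\<^sub>R omul (omul z (assoc x y z) - omul (ocnj b) y - n *\<^sub>R z) (ocnj x)"

definition reduced_residual :: "real \<Rightarrow> real \<Rightarrow> real \<Rightarrow> oct \<Rightarrow> oct \<Rightarrow> oct \<Rightarrow> oct \<Rightarrow> oct" where
  "reduced_residual p m n b x y z =
     p *\<^sub>R x + omul (forced_a m b x y z) y + omul (ocnj (forced_c n b x y z)) z - omul x (assoc x y z)"

definition reduced_eq :: "real \<Rightarrow> real \<Rightarrow> real \<Rightarrow> oct \<Rightarrow> oct \<Rightarrow> oct \<Rightarrow> oct \<Rightarrow> bool" where
  "reduced_eq p m n b x y z \<longleftrightarrow> reduced_residual p m n b x y z = 0"

lemma eigen_eq_iff_reduced_eq: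
  assumes "x \<noteq> 0"
  shows "eigen_eq (p, m, n, a, b, c) x y z \<longleftrightarrow>
    a = forced_a m b x y z \<and> c = forced_c n b x y z \<and> reduced_eq p m n b x y z"
proof -
  define r where "r = assoc x y z"
  have row2: "omul (ocnj a) x + m *\<^sub>R y + omul b z = omul y r \<longleftrightarrow> a = forced_a m b x y z"
  proof -
    have "omul (ocnj a) x + m *\<^sub>R y + omul b z = omul y r \<longleftrightarrow>
        omul (ocnj a) x = omul y r - m *\<^sub>R y - omul b z"
      by (auto simp: algebra_simps)
    also have "\<dots> \<longleftrightarrow> ocnj a = ocnj (forced_a m b x y z)"
      by (simp add: omul_right_eq_iff[OF assms] forced_a_def ocnj_scaleR r_def)
    finally show ?thesis by (metis ocnj_ocnj)
  qed
  have row3: "omul c x + omul (ocnj b) y + n *\<^sub>R z = omul z r \<longleftrightarrow> c = forced_c n b x y z"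
  proof -
    have "omul c x + omul (ocnj b) y + n *\<^sub>R z = omul z r \<longleftrightarrow>
        omul c x = omul z r - omul (ocnj b) y - n *\<^sub>R z"
      by (auto simp: algebra_simps)
    then show ?thesis by (simp add: omul_right_eq_iff[OF assms] forced_c_def r_def)
  qed
  show ?thesis
    unfolding eigen_eq_def Let_def prod.case r_def[symmetric] row2 row3
    by (auto simp: reduced_eq_def reduced_residual_def r_def)
qed

section \<open>The solution set is affine\<close>

type_synonym hermitian = "real \<times> real \<times> real \<times> oct \<times> oct \<times> oct"

definition eigen_lhs :: "oct \<Rightarrow> oct \<Rightarrow> oct \<Rightarrow> hermitian \<Rightarrow> oct \<times> oct \<times> oct" where
  "eigen_lhs x y z A = (case A of (p, m, n, a, b, c) \<Rightarrow>
     (p *\<^sub>R x + omul a y + omul (ocnj c) z,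
      omul (ocnj a) x + m *\<^sub>R y + omul b z,
      omul c x + omul (ocnj b) y + n *\<^sub>R z))"

lemma linear_eigen_lhs: "linear (eigen_lhs x y z)"
  by (rule linearI)
    (auto simp: eigen_lhs_def omul_add_left omul_scaleR_left ocnj_add ocnj_scaleR
      algebra_simps split: prod.splits)

lemma hsol_eq_vimage:
  "hsol x y z = eigen_lhs x y z -` {(omul x (assoc x y z), omul y (assoc x y z), omul z (assoc x y z))}"
  by (auto simp: hsol_def eigen_eq_def eigen_lhs_def Let_def split: prod.splits)

lemma affine_linear_vimage:
  assumes "linear f"
  shows "affine (f -` {c})"
  unfolding affine_def
  using linear_add[OF assms] linear_scale[OF assms] by (simp add: scaleR_add_left[symmetric])

lemma affine_hsol: "affine (hsol x y z)"
  unfolding hsol_eq_vimage by (rule affine_linear_vimage[OF linear_eigen_lhs])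

lemma aff_dim_eq_DIM_if_bij_betw:
  fixes S :: "'a::euclidean_space set" and f :: "'a \<Rightarrow> 'b::euclidean_space"
  assumes S: "affine S" and f: "linear f" and bij: "bij_betw f S UNIV"
  shows "aff_dim S = DIM('b)"
proof -
  obtain a where a: "a \<in> S"
    using bij by (metis UNIV_I bij_betw_def imageE)
  define V where "V = (\<lambda>x. x - a) ` S"
  have V: "subspace V"
    unfolding V_def by (rule affine_diffs_subspace_subtract[OF S a])
  have f_diff: "f (x - a) = f x - f a" for x
    by (rule linear_diff[OF f])
  have inj: "inj_on f V"
  proof (rule inj_onI)
    fix u v assume "u \<in> V" "v \<in> V" "f u = f v"
    then obtain s t where "s \<in> S" "t \<in> S" "u = s - a" "v = t - a" "f s = f t"
      unfolding V_def by (auto simp: f_diff)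
    then show "u = v" using bij by (auto simp: bij_betw_def dest: inj_onD)
  qed
  have surj: "f ` V = UNIV"
  proof -
    have "t \<in> f ` V" for t
    proof -
      obtain s where "s \<in> S" "f s = t + f a"
        using bij by (metis UNIV_I bij_betw_def imageE)
      then show ?thesis unfolding V_def by (force simp: f_diff)
    qed
    then show ?thesis by auto
  qed
  have "span V = V"
    using V by (rule span_eq_iff[THEN iffD2])
  then have "dim V = dim (f ` V)"
    using dim_image_eq[OF f, of V] inj by (simp del: span_eq_iff)
  then have "dim V = DIM('b)"
    by (simp add: surj dim_UNIV)
  have "aff_dim S = aff_dim V"
    unfolding V_def by (simp add: aff_dim_translation_eq_subtract)
  also have "\<dots> = int (dim V)"
    by (rule aff_dim_subspace[OF V])
  finally show ?thesis using \<open>dim V = DIM('b)\<close> by simp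
qed

section \<open>Generic triples\<close>

lemma rotation_system_iff:
  fixes \<alpha> \<beta> e f u v :: real
  assumes "\<alpha>\<^sup>2 + \<beta>\<^sup>2 \<noteq> 0"
  shows "\<beta> * u - \<alpha> * v = e \<and> \<alpha> * u + \<beta> * v = f \<longleftrightarrow>
    u = (\<beta> * e + \<alpha> * f) / (\<alpha>\<^sup>2 + \<beta>\<^sup>2) \<and> v = (\<beta> * f - \<alpha> * e) / (\<alpha>\<^sup>2 + \<beta>\<^sup>2)"
proof
  assume "\<beta> * u - \<alpha> * v = e \<and> \<alpha> * u + \<beta> * v = f"
  then have "(\<alpha>\<^sup>2 + \<beta>\<^sup>2) * u = \<beta> * e + \<alpha> * f" "(\<alpha>\<^sup>2 + \<beta>\<^sup>2) * v = \<beta> * f - \<alpha> * e"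
    by (auto simp: algebra_simps power2_eq_square)
  then show "u = (\<beta> * e + \<alpha> * f) / (\<alpha>\<^sup>2 + \<beta>\<^sup>2) \<and> v = (\<beta> * f - \<alpha> * e) / (\<alpha>\<^sup>2 + \<beta>\<^sup>2)"
    using assms by (simp add: eq_divide_eq mult.commute)
next
  assume "u = (\<beta> * e + \<alpha> * f) / (\<alpha>\<^sup>2 + \<beta>\<^sup>2) \<and> v = (\<beta> * f - \<alpha> * e) / (\<alpha>\<^sup>2 + \<beta>\<^sup>2)"
  then have u: "(\<alpha>\<^sup>2 + \<beta>\<^sup>2) * u = \<beta> * e + \<alpha> * f" and v: "(\<alpha>\<^sup>2 + \<beta>\<^sup>2) * v = \<beta> * f - \<alpha> * e"
    using assms by simp_all
  have "(\<alpha>\<^sup>2 + \<beta>\<^sup>2) * (\<beta> * u - \<alpha> * v) = \<beta> * ((\<alpha>\<^sup>2 + \<beta>\<^sup>2) * u) - \<alpha> * ((\<alpha>\<^sup>2 + \<beta>\<^sup>2) * v)"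
    "(\<alpha>\<^sup>2 + \<beta>\<^sup>2) * (\<alpha> * u + \<beta> * v) = \<alpha> * ((\<alpha>\<^sup>2 + \<beta>\<^sup>2) * u) + \<beta> * ((\<alpha>\<^sup>2 + \<beta>\<^sup>2) * v)"
    by (simp_all add: algebra_simps)
  then have "(\<alpha>\<^sup>2 + \<beta>\<^sup>2) * (\<beta> * u - \<alpha> * v) = (\<alpha>\<^sup>2 + \<beta>\<^sup>2) * e"
    "(\<alpha>\<^sup>2 + \<beta>\<^sup>2) * (\<alpha> * u + \<beta> * v) = (\<alpha>\<^sup>2 + \<beta>\<^sup>2) * f"
    unfolding u v by (simp_all add: algebra_simps power2_eq_square)
  then show "\<beta> * u - \<alpha> * v = e \<and> \<alpha> * u + \<beta> * v = f"
    using assms by auto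
qed

definition generic_form :: "oct \<Rightarrow> oct \<Rightarrow> oct \<Rightarrow> bool" where
  "generic_form x y z \<longleftrightarrow>
     (\<forall>e. e \<noteq> Ei \<longrightarrow> x $ e = 0) \<and>
     (\<forall>e. e \<notin> {Ei, Ej} \<longrightarrow> y $ e = 0) \<and>
     (\<forall>e. e \<notin> {Ei, Ej, Ek, El} \<longrightarrow> z $ e = 0)"

definition free_params :: "hermitian \<Rightarrow> real \<times> real \<times> real \<times> real \<times> real \<times> real" where
  "free_params A = (case A of (p, m, n, a, b, c) \<Rightarrow> (p, m, n, b$E1, b$Ek, b$Eil))"

lemma linear_free_params: "linear free_params"
  by (rule linearI) (auto simp: free_params_def split: prod.splits)

lemma free_params_eq_iff:
  "free_params A = (p, m, n, b1, b4, b7) \<longleftrightarrow>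
    (case A of (p', m', n', a, b, c) \<Rightarrow> p' = p \<and> m' = m \<and> n' = n \<and> b$E1 = b1 \<and> b$Ek = b4 \<and> b$Eil = b7)"
  by (cases A) (simp add: free_params_def)

locale generic_triple =
  fixes x y z :: oct
  assumes generic: "generic_form x y z"
    and assoc_nonzero: "assoc x y z \<noteq> 0"
begin

abbreviation "x2 \<equiv> x $ Ei"
abbreviation "y2 \<equiv> y $ Ei"
abbreviation "y3 \<equiv> y $ Ej"
abbreviation "z2 \<equiv> z $ Ei"
abbreviation "z3 \<equiv> z $ Ej"
abbreviation "z4 \<equiv> z $ Ek"
abbreviation "z8 \<equiv> z $ El"

lemma zero_coords:
  "x$E1 = 0" "x$Ej = 0" "x$Ek = 0" "x$Ekl = 0" "x$Ejl = 0" "x$Eil = 0" "x$El = 0"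
  "y$E1 = 0" "y$Ek = 0" "y$Ekl = 0" "y$Ejl = 0" "y$Eil = 0" "y$El = 0"
  "z$E1 = 0" "z$Ekl = 0" "z$Ejl = 0" "z$Eil = 0"
  using generic by (auto simp: generic_form_def)

lemma assoc_eq: "assoc x y z = (\<chi> e. if e = Ekl then 2 * x2 * y3 * z8 else 0)"
  using zero_coords by (simp add: oct_eq_iff assoc_def omul_nth algebra_simps)

lemma coords_nonzero: "x2 \<noteq> 0" "y3 \<noteq> 0" "z8 \<noteq> 0"
  using assoc_nonzero by (auto simp: assoc_eq oct_eq_iff)

definition rotation_rhs :: "real \<Rightarrow> real \<Rightarrow> real \<Rightarrow> real \<Rightarrow> real \<Rightarrow> real \<Rightarrow> real \<Rightarrow> real" where
  "rotation_rhs p m n b1 b3 b4 b7 = 2 * b1 * (y2*z2 + y3*z3) + 2 * b3 * y2*z4 - 2 * b4 * (y2*z3 - y3*z2)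
     - 2 * b7 * y2*z8 + m * (y2\<^sup>2 + y3\<^sup>2) + n * (z2\<^sup>2 + z3\<^sup>2 + z4\<^sup>2 + z8\<^sup>2) - p * x2\<^sup>2"

text \<open>\<open>forced_a\<close> and \<open>forced_c\<close> carry a factor \<open>1 / x\<^sub>2\<close>, hence the scaling by \<open>x\<^sub>2\<close>.\<close>

lemma reduced_residual_nth:
  fixes p m n :: real and b :: oct
  defines "w \<equiv> reduced_residual p m n b x y z"
  shows
    "x2 * w $ E1 = - 2 * y3 * z8 * b$Ekl"
    "x2 * w $ Ei = 2 * y3 * (z4 * b$Ei + z8 * b$Ejl) - rotation_rhs p m n (b$E1) (b$Ej) (b$Ek) (b$Eil)"
    "x2 * w $ Ej = 0"
    "x2 * w $ Ek = 2 * y3 * z8 * (b$El - 2*x2*z2*z8)"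
    "x2 * w $ Ekl = - 2 * y3 * z4 * b$Ekl"
    "x2 * w $ Ejl = 2 * y3 * (z8 * b$Ei - z4 * b$Ejl - z8 * x2 * (x2\<^sup>2 + y2\<^sup>2 - y3\<^sup>2 + z2\<^sup>2 - z3\<^sup>2 - z4\<^sup>2 - z8\<^sup>2))"
    "x2 * w $ Eil = - 2 * y3 * (z8 * b$Ej + z4 * b$Eil - 2 * x2 * z8 * (y2*y3 + z2*z3))"
    "x2 * w $ El = - 2 * y3 * z4 * (b$El - 2*x2*z2*z8)"
  using coords_nonzero(1) zero_coords
  by (simp_all add: w_def reduced_residual_def rotation_rhs_def forced_a_def forced_c_def assoc_eq omul_nth ocnj_nth inner_oct
      field_simps power2_eq_square power3_eq_cube)

lemma reduced_eq_iff:
  "reduced_eq p m n b x y z \<longleftrightarrow>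
     b$Ekl = 0 \<and> b$El = 2*x2*z2*z8 \<and>
     z8 * b$Ej + z4 * b$Eil = 2 * x2 * z8 * (y2*y3 + z2*z3) \<and>
     z8 * b$Ei - z4 * b$Ejl = z8 * x2 * (x2\<^sup>2 + y2\<^sup>2 - y3\<^sup>2 + z2\<^sup>2 - z3\<^sup>2 - z4\<^sup>2 - z8\<^sup>2) \<and>
     2 * y3 * (z4 * b$Ei + z8 * b$Ejl) = rotation_rhs p m n (b$E1) (b$Ej) (b$Ek) (b$Eil)"
  (is "_ \<longleftrightarrow> ?equations")
proof -
  have "reduced_eq p m n b x y z \<longleftrightarrow> (\<forall>e. x2 * reduced_residual p m n b x y z $ e = 0)"
    using coords_nonzero(1) by (simp add: reduced_eq_def vec_eq_iff)
  also have "\<dots> \<longleftrightarrow> ?equations"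
    unfolding all_ob reduced_residual_nth using coords_nonzero(2,3) by auto
  finally show ?thesis .
qed

lemma ex1_reduced_eq: "\<exists>!b. reduced_eq p m n b x y z \<and> b$E1 = b1 \<and> b$Ek = b4 \<and> b$Eil = b7"
proof -
  have z: "z4\<^sup>2 + z8\<^sup>2 \<noteq> 0"
    using coords_nonzero(3) by (simp add: sum_power2_eq_zero_iff)
  define b3 where "b3 = (2 * x2 * z8 * (y2*y3 + z2*z3) - z4 * b7) / z8"
  define e where "e = z8 * x2 * (x2\<^sup>2 + y2\<^sup>2 - y3\<^sup>2 + z2\<^sup>2 - z3\<^sup>2 - z4\<^sup>2 - z8\<^sup>2)"
  define f where "f = rotation_rhs p m n b1 b3 b4 b7 / (2 * y3)"
  define B :: oct where "B = (\<chi> i. case i of E1 \<Rightarrow> b1 | Ei \<Rightarrow> (z8 * e + z4 * f) / (z4\<^sup>2 + z8\<^sup>2)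
    | Ej \<Rightarrow> b3 | Ek \<Rightarrow> b4 | Ekl \<Rightarrow> 0 | Ejl \<Rightarrow> (z8 * f - z4 * e) / (z4\<^sup>2 + z8\<^sup>2)
    | Eil \<Rightarrow> b7 | El \<Rightarrow> 2 * x2 * z2 * z8)"
  have b3_iff: "z8 * u + z4 * b7 = 2 * x2 * z8 * (y2*y3 + z2*z3) \<longleftrightarrow> u = b3" for u
    using coords_nonzero(3) by (auto simp: b3_def field_simps)
  have f_iff: "2 * y3 * u = rotation_rhs p m n b1 b3 b4 b7 \<longleftrightarrow> u = f" for u
    using coords_nonzero(2) by (auto simp: f_def field_simps)
  have "reduced_eq p m n b x y z \<and> b$E1 = b1 \<and> b$Ek = b4 \<and> b$Eil = b7 \<longleftrightarrow> b = B" for b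
  proof -
    have "reduced_eq p m n b x y z \<and> b$E1 = b1 \<and> b$Ek = b4 \<and> b$Eil = b7 \<longleftrightarrow>
      b$E1 = b1 \<and> b$Ek = b4 \<and> b$Eil = b7 \<and> b$Ekl = 0 \<and> b$El = 2 * x2 * z2 * z8 \<and> b$Ej = b3 \<and>
      (z8 * b$Ei - z4 * b$Ejl = e \<and> z4 * b$Ei + z8 * b$Ejl = f)"
    proof (cases "b$E1 = b1 \<and> b$Ek = b4 \<and> b$Eil = b7")
      case True
      then show ?thesis
        unfolding reduced_eq_iff e_def by (simp add: b3_iff f_iff cong: conj_cong)
    qed auto
    also have "\<dots> \<longleftrightarrow> b = B"
      unfolding rotation_system_iff[OF z] by (auto simp: B_def oct_eq_iff)
    finally show ?thesis .
  qed
  then show ?thesis by simp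
qed

lemma ex1_hsol: "\<exists>!A. A \<in> hsol x y z \<and> free_params A = (p, m, n, b1, b4, b7)"
proof -
  have x: "x \<noteq> 0" using coords_nonzero(1) by auto
  obtain B where B: "reduced_eq p m n B x y z \<and> B$E1 = b1 \<and> B$Ek = b4 \<and> B$Eil = b7"
    and unique: "\<And>b. reduced_eq p m n b x y z \<and> b$E1 = b1 \<and> b$Ek = b4 \<and> b$Eil = b7 \<Longrightarrow> b = B"
    using ex1_reduced_eq by metis
  show ?thesis
  proof (rule ex1I[of _ "(p, m, n, forced_a m B x y z, B, forced_c n B x y z)"])
    show "(p, m, n, forced_a m B x y z, B, forced_c n B x y z) \<in> hsol x y z \<and>
        free_params (p, m, n, forced_a m B x y z, B, forced_c n B x y z) = (p, m, n, b1, b4, b7)"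
      using B by (simp add: hsol_def free_params_def eigen_eq_iff_reduced_eq[OF x])
  next
    fix A
    assume "A \<in> hsol x y z \<and> free_params A = (p, m, n, b1, b4, b7)"
    then show "A = (p, m, n, forced_a m B x y z, B, forced_c n B x y z)"
      using unique by (cases A) (auto simp: hsol_def free_params_def eigen_eq_iff_reduced_eq[OF x])
  qed
qed

lemma bij_betw_free_params: "bij_betw free_params (hsol x y z) UNIV"
proof -
  have ex1: "\<exists>!A. A \<in> hsol x y z \<and> free_params A = t" for t
    using ex1_hsol by (cases t) simp
  have "inj_on free_params (hsol x y z)"
  proof (rule inj_onI)
    fix A B assume A: "A \<in> hsol x y z" and B: "B \<in> hsol x y z"
      and params: "free_params A = free_params B"
    obtain A0 where unique: "\<And>A'. A' \<in> hsol x y z \<and> free_params A' = free_params A \<Longrightarrow> A' = A0"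
      using ex1[of "free_params A"] by (elim ex1E) blast
    have "A = A0" using A by (intro unique) simp
    moreover have "B = A0" using B params by (intro unique) simp
    ultimately show "A = B" by simp
  qed
  moreover have "t \<in> free_params ` hsol x y z" for t
  proof -
    obtain A where "A \<in> hsol x y z" "free_params A = t"
      using ex1_implies_ex[OF ex1[of t]] by (elim exE conjE)
    then show ?thesis by blast
  qed
  ultimately show ?thesis by (auto simp: bij_betw_def)
qed

lemma aff_dim_hsol: "aff_dim (hsol x y z) = 6"
  using aff_dim_eq_DIM_if_bij_betw[OF affine_hsol linear_free_params bij_betw_free_params] by simp

end

section \<open>Quaternions\<close>

instantiation quat :: ring_1
begin

definition zero_quat_def: "0 = Q 0 0 0 0"
definition one_quat_def: "1 = Q 1 0 0 0"
definition plus_quat_def: "a + b = qadd a b"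
definition minus_quat_def: "a - b = qsub a b"
definition uminus_quat_def: "- a = (case a of Q a1 a2 a3 a4 \<Rightarrow> Q (- a1) (- a2) (- a3) (- a4))"
definition times_quat_def: "a * b = qmul a b"

instance
proof
  fix a b c :: quat
  show "a + b + c = a + (b + c)" unfolding plus_quat_def by (cases a; cases b; cases c) simp
  show "a + b = b + a" unfolding plus_quat_def by (cases a; cases b) simp
  show "0 + a = a" unfolding plus_quat_def zero_quat_def by (cases a) simp
  show "- a + a = 0" unfolding plus_quat_def zero_quat_def uminus_quat_def by (cases a) simp
  show "a - b = a + - b"
    unfolding plus_quat_def minus_quat_def uminus_quat_def by (cases a; cases b) simp
  show "a * b * c = a * (b * c)"
    unfolding times_quat_def by (cases a; cases b; cases c) (simp add: algebra_simps)
  show "1 * a = a" unfolding times_quat_def one_quat_def by (cases a) simp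
  show "a * 1 = a" unfolding times_quat_def one_quat_def by (cases a) simp
  show "(a + b) * c = a * c + b * c"
    unfolding times_quat_def plus_quat_def by (cases a; cases b; cases c) (simp add: algebra_simps)
  show "a * (b + c) = a * b + a * c"
    unfolding times_quat_def plus_quat_def by (cases a; cases b; cases c) (simp add: algebra_simps)
  show "(0::quat) \<noteq> 1" unfolding zero_quat_def one_quat_def by simp
qed

end

lemma Q_add: "Q a1 a2 a3 a4 + Q b1 b2 b3 b4 = Q (a1 + b1) (a2 + b2) (a3 + b3) (a4 + b4)"
  by (simp add: plus_quat_def)

lemma Q_mult:
  "Q a1 a2 a3 a4 * Q b1 b2 b3 b4 =
     Q (a1*b1 - a2*b2 - a3*b3 - a4*b4) (a1*b2 + a2*b1 + a3*b4 - a4*b3)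
       (a1*b3 - a2*b4 + a3*b1 + a4*b2) (a1*b4 + a2*b3 - a3*b2 + a4*b1)"
  by (simp add: times_quat_def)

lemma qcnj_mult: "qcnj (a * b) = qcnj b * qcnj a"
  by (cases a; cases b) (simp add: Q_mult algebra_simps)

lemma qcnj_qcnj [simp]: "qcnj (qcnj a) = a"
  by (cases a) simp

lemma real_quat_commute: "Q s 0 0 0 * a = a * Q s 0 0 0"
  by (cases a) (simp add: Q_mult)

fun qnorm2 :: "quat \<Rightarrow> real" where
  "qnorm2 (Q a b c d) = a\<^sup>2 + b\<^sup>2 + c\<^sup>2 + d\<^sup>2"

lemma qnorm2_mult: "qnorm2 (a * b) = qnorm2 a * qnorm2 b"
  by (cases a; cases b) (simp add: Q_mult power2_eq_square algebra_simps)

lemma qnorm2_pos: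
  assumes "q \<noteq> 0"
  shows "qnorm2 q > 0"
proof (cases q)
  case (Q a b c d)
  then have "a\<^sup>2 > 0 \<or> b\<^sup>2 > 0 \<or> c\<^sup>2 > 0 \<or> d\<^sup>2 > 0"
    using assms by (auto simp: zero_quat_def)
  moreover have "a\<^sup>2 \<ge> 0" "b\<^sup>2 \<ge> 0" "c\<^sup>2 \<ge> 0" "d\<^sup>2 \<ge> 0" by simp_all
  ultimately have "a\<^sup>2 + b\<^sup>2 + c\<^sup>2 + d\<^sup>2 > 0" by linarith
  then show ?thesis using Q by simp
qed

lemma mult_qcnj: "a * qcnj a = Q (qnorm2 a) 0 0 0"
  by (cases a) (simp add: Q_mult power2_eq_square algebra_simps)

lemma qcnj_mult_self: "qcnj a * a = Q (qnorm2 a) 0 0 0"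
  by (cases a) (simp add: Q_mult power2_eq_square algebra_simps)

definition qunit :: "quat \<Rightarrow> bool" where
  "qunit a \<longleftrightarrow> qnorm2 a = 1"

lemma qunit_one: "qunit 1"
  by (simp add: qunit_def one_quat_def)

lemma qunit_qcnj: "qunit q \<Longrightarrow> qunit (qcnj q)"
  by (cases q) (simp add: qunit_def)

lemma qunit_mult_qcnj: "qunit q \<Longrightarrow> q * qcnj q = 1"
  by (simp add: mult_qcnj qunit_def one_quat_def)

lemma qunit_qcnj_mult: "qunit q \<Longrightarrow> qcnj q * q = 1"
  by (simp add: qcnj_mult_self qunit_def one_quat_def)

lemma qunit_cancel_left: "qunit q \<Longrightarrow> qcnj q * (q * x) = x"
  by (simp add: mult.assoc[symmetric] qunit_qcnj_mult)

lemma qunit_normalize: "q \<noteq> 0 \<Longrightarrow> qunit (Q (1 / sqrt (qnorm2 q)) 0 0 0 * q)"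
  using qnorm2_pos[of q] by (simp add: qunit_def qnorm2_mult power_divide)

lemma conj_action_real_scale:
  "(Q s 0 0 0 * q) * u * qcnj (Q s 0 0 0 * q) = Q (s * s) 0 0 0 * (q * u * qcnj q)"
proof -
  have "(Q s 0 0 0 * q) * u * qcnj (Q s 0 0 0 * q) = Q s 0 0 0 * (q * u * qcnj q) * Q s 0 0 0"
    by (simp add: qcnj_mult mult.assoc)
  also have "\<dots> = Q s 0 0 0 * Q s 0 0 0 * (q * u * qcnj q)"
    by (metis real_quat_commute mult.assoc)
  finally show ?thesis by (simp add: Q_mult)
qed

lemma conj_action_fixes_real:
  assumes "qunit q"
  shows "q * Q t 0 0 0 * qcnj q = Q t 0 0 0"
proof -
  have "q * Q t 0 0 0 * qcnj q = Q t 0 0 0 * (q * qcnj q)"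
    unfolding real_quat_commute[of t q, symmetric] by (simp only: mult.assoc)
  then show ?thesis using qunit_mult_qcnj[OF assms] by simp
qed

lemma conj_action_fixes_i:
  assumes "qunit (Q a b 0 0)"
  shows "Q a b 0 0 * Q 0 t 0 0 * qcnj (Q a b 0 0) = Q 0 t 0 0"
proof -
  have "a * (a * t) + b * (b * t) = (a * a + b * b) * t" by (simp add: algebra_simps)
  also have "\<dots> = t" using assms by (simp add: qunit_def power2_eq_square)
  finally show ?thesis by (simp add: Q_mult algebra_simps)
qed

text \<open>To rotate \<open>u\<close> onto the axis \<open>e\<close> by \<open>u \<mapsto> q u q\<^sup>*\<close>, take \<open>q\<close> to be \<open>|u| - e u\<close>
  normalised; when this vanishes, \<open>u\<close> points along \<open>-e\<close> and a half turn suffices.\<close>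

lemma pure_quat_rotate_to_i: "\<exists>q \<rho>. qunit q \<and> q * Q 0 u2 u3 u4 * qcnj q = Q 0 \<rho> 0 0"
proof -
  define n where "n = sqrt (u2\<^sup>2 + u3\<^sup>2 + u4\<^sup>2)"
  have nn: "n * n = u2\<^sup>2 + u3\<^sup>2 + u4\<^sup>2"
    unfolding n_def by simp
  define q where "q = Q (n + u2) 0 u4 (- u3)"
  show ?thesis
  proof (cases "q = 0")
    case False
    have "q * Q 0 u2 u3 u4 * qcnj q = Q 0 (n * qnorm2 q - (n + u2) * (n * n - (u2\<^sup>2 + u3\<^sup>2 + u4\<^sup>2)))
        (u3 * (n * n - (u2\<^sup>2 + u3\<^sup>2 + u4\<^sup>2))) (u4 * (n * n - (u2\<^sup>2 + u3\<^sup>2 + u4\<^sup>2)))"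
      unfolding q_def by (simp add: Q_mult algebra_simps power2_eq_square)
    then have "q * Q 0 u2 u3 u4 * qcnj q = Q 0 (n * qnorm2 q) 0 0"
      using nn by simp
    then have "(Q (1 / sqrt (qnorm2 q)) 0 0 0 * q) * Q 0 u2 u3 u4 * qcnj (Q (1 / sqrt (qnorm2 q)) 0 0 0 * q)
        = Q 0 n 0 0"
      using qnorm2_pos[OF False] by (simp add: conj_action_real_scale Q_mult)
    then show ?thesis using qunit_normalize[OF False] by blast
  next
    case True
    then have "u3 = 0" "u4 = 0" unfolding q_def zero_quat_def by auto
    then have "Q 0 0 1 0 * Q 0 u2 u3 u4 * qcnj (Q 0 0 1 0) = Q 0 (- u2) 0 0"
      by (simp add: Q_mult)
    moreover have "qunit (Q 0 0 1 0)" by (simp add: qunit_def)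
    ultimately show ?thesis by blast
  qed
qed

lemma jk_quat_rotate_to_j:
  "\<exists>a b \<rho>. qunit (Q a b 0 0) \<and> Q a b 0 0 * Q 0 0 u3 u4 * qcnj (Q a b 0 0) = Q 0 0 \<rho> 0"
proof -
  define n where "n = sqrt (u3\<^sup>2 + u4\<^sup>2)"
  have nn: "n * n = u3\<^sup>2 + u4\<^sup>2"
    unfolding n_def by simp
  define q where "q = Q (n + u3) (- u4) 0 0"
  define s where "s = 1 / sqrt (qnorm2 q)"
  show ?thesis
  proof (cases "q = 0")
    case False
    have "q * Q 0 0 u3 u4 * qcnj q =
        Q 0 0 (n * qnorm2 q - (n + u3) * (n * n - (u3\<^sup>2 + u4\<^sup>2))) (u4 * (n * n - (u3\<^sup>2 + u4\<^sup>2)))"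
      unfolding q_def by (simp add: Q_mult algebra_simps power2_eq_square)
    then have "q * Q 0 0 u3 u4 * qcnj q = Q 0 0 (n * qnorm2 q) 0"
      using nn by simp
    then have "(Q s 0 0 0 * q) * Q 0 0 u3 u4 * qcnj (Q s 0 0 0 * q) = Q 0 0 n 0"
      using qnorm2_pos[OF False] by (simp add: conj_action_real_scale Q_mult s_def)
    moreover have "Q s 0 0 0 * q = Q (s * (n + u3)) (s * (- u4)) 0 0"
      unfolding q_def by (simp add: Q_mult)
    ultimately show ?thesis
      using qunit_normalize[OF False] unfolding s_def by metis
  next
    case True
    then have "u4 = 0" unfolding q_def zero_quat_def by auto
    then have "Q 0 1 0 0 * Q 0 0 u3 u4 * qcnj (Q 0 1 0 0) = Q 0 0 (- u3) 0"
      by (simp add: Q_mult)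
    moreover have "qunit (Q 0 1 0 0)" by (simp add: qunit_def)
    ultimately show ?thesis by blast
  qed
qed

lemma pure_quat_rotate_into_ij:
  "\<exists>a b \<rho>. qunit (Q a b 0 0) \<and> Q a b 0 0 * Q 0 u2 u3 u4 * qcnj (Q a b 0 0) = Q 0 u2 \<rho> 0"
proof -
  obtain a b \<rho> where q: "qunit (Q a b 0 0)" and h: "Q a b 0 0 * Q 0 0 u3 u4 * qcnj (Q a b 0 0) = Q 0 0 \<rho> 0"
    using jk_quat_rotate_to_j by blast
  have "Q 0 u2 u3 u4 = Q 0 u2 0 0 + Q 0 0 u3 u4"
    by (simp add: Q_add)
  then have "Q a b 0 0 * Q 0 u2 u3 u4 * qcnj (Q a b 0 0) =
      Q a b 0 0 * Q 0 u2 0 0 * qcnj (Q a b 0 0) + Q a b 0 0 * Q 0 0 u3 u4 * qcnj (Q a b 0 0)"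
    by (simp only: distrib_left distrib_right)
  also have "\<dots> = Q 0 u2 0 0 + Q 0 0 \<rho> 0"
    by (simp only: conj_action_fixes_i[OF q] h)
  finally show ?thesis
    using q by (auto simp: Q_add)
qed

lemma exists_qunit_real_product:
  assumes q: "qunit q"
  shows "\<exists>r \<rho>. qunit r \<and> r * t * qcnj q = Q \<rho> 0 0 0"
proof (cases "t = 0")
  case True
  then show ?thesis
    using qunit_one by (intro exI[of _ 1] exI[of _ 0]) (simp add: zero_quat_def[symmetric])
next
  case False
  have "q * qcnj t \<noteq> 0"
  proof
    assume "q * qcnj t = 0"
    then have "qcnj q * (q * qcnj t) = 0" by simp
    then have "qcnj t = 0" using qunit_cancel_left[OF q] by simp
    then show False using False by (cases t) (simp add: zero_quat_def)
  qed
  moreover have "Q s 0 0 0 * (q * qcnj t) * t * qcnj q = Q (s * qnorm2 t) 0 0 0" for s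
    using conj_action_fixes_real[OF q] by (simp add: mult.assoc qcnj_mult_self Q_mult)
  ultimately show ?thesis using qunit_normalize by blast
qed

section \<open>Automorphisms of the octonions\<close>

definition oct_aut :: "(oct \<Rightarrow> oct) \<Rightarrow> bool" where
  "oct_aut f \<longleftrightarrow>
     linear f \<and> bij f \<and> (\<forall>a b. f (omul a b) = omul (f a) (f b)) \<and> (\<forall>a. f (ocnj a) = ocnj (f a))"

lemma oct_aut_comp: "oct_aut f \<Longrightarrow> oct_aut g \<Longrightarrow> oct_aut (f \<circ> g)"
  unfolding oct_aut_def by (auto simp: linear_compose bij_comp)

lemma oct_aut_assoc: "oct_aut f \<Longrightarrow> f (assoc x y z) = assoc (f x) (f y) (f z)"
  unfolding assoc_def oct_aut_def by (simp add: linear_diff)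

lemma oct_aut_ore:
  assumes f: "oct_aut f" and w: "ore w = 0"
  shows "ore (f w) = 0"
proof -
  have lin: "linear f" and cnj: "f (ocnj w) = ocnj (f w)"
    using f by (simp_all add: oct_aut_def)
  have "ocnj w = - w" using w by (simp add: oct_eq_iff ocnj_nth ore_def)
  then have "ocnj (f w) = - f w" by (metis cnj lin linear_neg)
  then show ?thesis by (simp add: oct_eq_iff ocnj_nth ore_def)
qed

lemma ohead_ojoin [simp]: "ohead (ojoin a b) = a"
  by (cases a; cases b) (simp add: ohead_def)

lemma otail_ojoin [simp]: "otail (ojoin a b) = b"
  by (cases a; cases b) (simp add: otail_def)

lemma ojoin_ohead_otail: "ojoin (ohead w) (otail w) = w"
  by (simp add: ohead_def otail_def oct_eq_iff)

lemma ojoin_cases: obtains a b where "w = ojoin a b"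
  using ojoin_ohead_otail by metis

lemma omul_ojoin: "omul (ojoin a b) (ojoin c d) = ojoin (a * c - qcnj d * b) (d * a + b * qcnj c)"
  by (simp add: omul_def times_quat_def plus_quat_def minus_quat_def)

lemma ocnj_ojoin: "ocnj (ojoin a b) = ojoin (qcnj a) (- b)"
  by (cases a; cases b) (simp add: oct_eq_iff ocnj_nth uminus_quat_def)

lemma ojoin_add: "ojoin a b + ojoin c d = ojoin (a + c) (b + d)"
  by (cases a; cases b; cases c; cases d) (simp add: oct_eq_iff Q_add)

lemma scaleR_ojoin: "s *\<^sub>R ojoin a b = ojoin (Q s 0 0 0 * a) (Q s 0 0 0 * b)"
  by (cases a; cases b) (simp add: oct_eq_iff Q_mult)

definition qpair_aut :: "quat \<Rightarrow> quat \<Rightarrow> oct \<Rightarrow> oct" where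
  "qpair_aut q r w = ojoin (q * ohead w * qcnj q) (r * otail w * qcnj q)"

lemma qpair_aut_ojoin: "qpair_aut q r (ojoin a b) = ojoin (q * a * qcnj q) (r * b * qcnj q)"
  by (simp add: qpair_aut_def)

lemma linear_qpair_aut: "linear (qpair_aut q r)"
proof (rule linearI)
  fix x y :: oct and s :: real
  obtain a b where x: "x = ojoin a b" by (rule ojoin_cases)
  obtain c d where y: "y = ojoin c d" by (rule ojoin_cases)
  show "qpair_aut q r (x + y) = qpair_aut q r x + qpair_aut q r y"
    unfolding x y ojoin_add qpair_aut_ojoin by (simp add: algebra_simps)
  show "qpair_aut q r (s *\<^sub>R x) = s *\<^sub>R qpair_aut q r x"
    unfolding x scaleR_ojoin qpair_aut_ojoin
    by (simp add: mult.assoc[symmetric] real_quat_commute) (simp add: mult.assoc real_quat_commute)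
qed

lemma oct_aut_qpair_aut:
  assumes q: "qunit q" and r: "qunit r"
  shows "oct_aut (qpair_aut q r)"
  unfolding oct_aut_def
proof (intro conjI allI)
  show "linear (qpair_aut q r)"
    by (rule linear_qpair_aut)
  have inverse: "qpair_aut (qcnj q') (qcnj r') (qpair_aut q' r' x) = x"
    if "qunit q'" "qunit r'" for q' r' x
  proof -
    obtain a b where x: "x = ojoin a b" by (rule ojoin_cases)
    show ?thesis
      unfolding x qpair_aut_ojoin
      using that by (simp add: mult.assoc qunit_cancel_left qunit_qcnj_mult)
  qed
  have "qpair_aut q r (qpair_aut (qcnj q) (qcnj r) x) = x" for x
    using inverse[of "qcnj q" "qcnj r" x] q r by (simp add: qunit_qcnj)
  then show "bij (qpair_aut q r)"
    by (intro o_bij[of "qpair_aut (qcnj q) (qcnj r)"]) (simp_all add: fun_eq_iff q r inverse)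
  fix x y
  obtain a b where x: "x = ojoin a b" by (rule ojoin_cases)
  obtain c d where y: "y = ojoin c d" by (rule ojoin_cases)
  have "q * (a * c - qcnj d * b) * qcnj q =
      q * a * qcnj q * (q * c * qcnj q) - qcnj (r * d * qcnj q) * (r * b * qcnj q)"
    "r * (d * a + b * qcnj c) * qcnj q =
      r * d * qcnj q * (q * a * qcnj q) + r * b * qcnj q * qcnj (q * c * qcnj q)"
    by (simp_all add: qcnj_mult mult.assoc qunit_cancel_left[OF q] qunit_cancel_left[OF r] algebra_simps)
  then show "qpair_aut q r (omul x y) = omul (qpair_aut q r x) (qpair_aut q r y)"
    unfolding x y omul_ojoin qpair_aut_ojoin by simp
  show "qpair_aut q r (ocnj x) = ocnj (qpair_aut q r x)"
    unfolding x ocnj_ojoin qpair_aut_ojoin by (simp add: qcnj_mult mult.assoc)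
qed

text \<open>The automorphism \<open>i \<mapsto> j \<mapsto> \<ell> \<mapsto> i\<close>.\<close>

definition cycle_ijl :: "oct \<Rightarrow> oct" where
  "cycle_ijl w = (\<chi> e. case e of E1 \<Rightarrow> w$E1 | Ei \<Rightarrow> w$El | Ej \<Rightarrow> w$Ei | Ek \<Rightarrow> - w$Eil
     | Ekl \<Rightarrow> w$Ekl | Ejl \<Rightarrow> w$Ek | Eil \<Rightarrow> - w$Ejl | El \<Rightarrow> w$Ej)"

lemma cycle_ijl_nth:
  "cycle_ijl w $ E1 = w$E1" "cycle_ijl w $ Ei = w$El" "cycle_ijl w $ Ej = w$Ei"
  "cycle_ijl w $ Ek = - w$Eil" "cycle_ijl w $ Ekl = w$Ekl" "cycle_ijl w $ Ejl = w$Ek"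
  "cycle_ijl w $ Eil = - w$Ejl" "cycle_ijl w $ El = w$Ej"
  by (simp_all add: cycle_ijl_def)

lemma oct_aut_cycle_ijl: "oct_aut cycle_ijl"
  unfolding oct_aut_def
proof (intro conjI allI)
  show "linear cycle_ijl"
    by (rule linearI) (simp_all add: oct_eq_iff cycle_ijl_nth)
  have "cycle_ijl \<circ> (cycle_ijl \<circ> cycle_ijl) = id" "(cycle_ijl \<circ> cycle_ijl) \<circ> cycle_ijl = id"
    by (simp_all add: fun_eq_iff oct_eq_iff cycle_ijl_nth)
  then show "bij cycle_ijl" by (metis o_bij)
  fix a b
  show "cycle_ijl (omul a b) = omul (cycle_ijl a) (cycle_ijl b)"
    by (simp add: oct_eq_iff cycle_ijl_nth omul_nth algebra_simps)
  show "cycle_ijl (ocnj a) = ocnj (cycle_ijl a)"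
    by (simp add: oct_eq_iff cycle_ijl_nth ocnj_nth)
qed

section \<open>Normal form of an imaginary triple\<close>

lemma imaginary_ojoin: "ore w = 0 \<Longrightarrow> w = ojoin (Q 0 (w$Ei) (w$Ej) (w$Ek)) (otail w)"
  by (simp add: oct_eq_iff ore_def otail_def)

lemma axis_ojoin:
  "axis Ei 1 = ojoin (Q 0 1 0 0) 0" "axis Ej 1 = ojoin (Q 0 0 1 0) 0" "axis El 1 = ojoin 0 (Q 1 0 0 0)"
  by (simp_all add: oct_eq_iff axis_def zero_quat_def)

lemma exists_aut_to_i:
  assumes "ore x = 0"
  shows "\<exists>f. oct_aut f \<and> (\<forall>e. e \<noteq> Ei \<longrightarrow> f x $ e = 0)"
proof -
  obtain q \<alpha> where q: "qunit q" and hq: "q * Q 0 (x$Ei) (x$Ej) (x$Ek) * qcnj q = Q 0 \<alpha> 0 0"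
    using pure_quat_rotate_to_i by blast
  obtain r \<beta> where r: "qunit r" and hr: "r * otail x * qcnj q = Q \<beta> 0 0 0"
    using exists_qunit_real_product[OF q] by blast
  obtain q' \<gamma> where q': "qunit q'" and hq': "q' * Q 0 \<beta> \<alpha> 0 * qcnj q' = Q 0 \<gamma> 0 0"
    using pure_quat_rotate_to_i by blast
  have "qpair_aut q r x = ojoin (Q 0 \<alpha> 0 0) (Q \<beta> 0 0 0)"
    by (subst imaginary_ojoin[OF assms]) (simp add: qpair_aut_ojoin hq hr)
  moreover have "cycle_ijl (ojoin (Q 0 \<alpha> 0 0) (Q \<beta> 0 0 0)) = ojoin (Q 0 \<beta> \<alpha> 0) 0"
    by (simp add: oct_eq_iff cycle_ijl_nth zero_quat_def)
  moreover have "qpair_aut q' 1 (ojoin (Q 0 \<beta> \<alpha> 0) 0) = ojoin (Q 0 \<gamma> 0 0) 0"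
    by (simp add: qpair_aut_ojoin hq')
  ultimately have "(qpair_aut q' 1 \<circ> cycle_ijl \<circ> qpair_aut q r) x = ojoin (Q 0 \<gamma> 0 0) 0"
    by simp
  moreover have "oct_aut (qpair_aut q' 1 \<circ> cycle_ijl \<circ> qpair_aut q r)"
    by (intro oct_aut_comp oct_aut_qpair_aut oct_aut_cycle_ijl q q' r qunit_one)
  ultimately show ?thesis
    by (intro exI[of _ "qpair_aut q' 1 \<circ> cycle_ijl \<circ> qpair_aut q r"]) (auto simp: all_ob zero_quat_def)
qed

text \<open>Applying \<open>cycle_ijl\<close> twice moves \<open>i\<close> to \<open>\<ell>\<close>, which \<open>qpair_aut q' q'\<close> fixes; this
  leaves the head free to rotate the \<open>j\<close>- and \<open>\<ell>\<close>-components of \<open>y\<close> together.\<close>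

lemma exists_aut_to_ij_fixing_i:
  assumes "ore y = 0"
  shows "\<exists>f. oct_aut f \<and> f (axis Ei 1) = axis Ei 1 \<and> (\<forall>e. e \<notin> {Ei, Ej} \<longrightarrow> f y $ e = 0)"
proof -
  obtain a b s where q: "qunit (Q a b 0 0)"
    and hq: "Q a b 0 0 * Q 0 (y$Ei) (y$Ej) (y$Ek) * qcnj (Q a b 0 0) = Q 0 (y$Ei) s 0"
    using pure_quat_rotate_into_ij by blast
  obtain r \<tau> where r: "qunit r" and hr: "r * otail y * qcnj (Q a b 0 0) = Q \<tau> 0 0 0"
    using exists_qunit_real_product[OF q] by blast
  obtain q' \<gamma> where q': "qunit q'" and hq': "q' * Q 0 s \<tau> 0 * qcnj q' = Q 0 \<gamma> 0 0"
    using pure_quat_rotate_to_i by blast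
  define f where "f = cycle_ijl \<circ> qpair_aut q' q' \<circ> cycle_ijl \<circ> cycle_ijl \<circ> qpair_aut (Q a b 0 0) r"
  have "qpair_aut (Q a b 0 0) r y = ojoin (Q 0 (y$Ei) s 0) (Q \<tau> 0 0 0)"
    by (subst imaginary_ojoin[OF assms]) (simp only: qpair_aut_ojoin hq hr)
  moreover have "cycle_ijl (cycle_ijl (ojoin (Q 0 (y$Ei) s 0) (Q \<tau> 0 0 0))) = ojoin (Q 0 s \<tau> 0) (Q (y$Ei) 0 0 0)"
    by (simp add: oct_eq_iff cycle_ijl_nth)
  moreover have "qpair_aut q' q' (ojoin (Q 0 s \<tau> 0) (Q (y$Ei) 0 0 0)) = ojoin (Q 0 \<gamma> 0 0) (Q (y$Ei) 0 0 0)"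
    by (simp only: qpair_aut_ojoin hq' conj_action_fixes_real[OF q'])
  moreover have "cycle_ijl (ojoin (Q 0 \<gamma> 0 0) (Q (y$Ei) 0 0 0)) = ojoin (Q 0 (y$Ei) \<gamma> 0) 0"
    by (simp add: oct_eq_iff cycle_ijl_nth zero_quat_def)
  ultimately have "f y = ojoin (Q 0 (y$Ei) \<gamma> 0) 0"
    by (simp add: f_def)
  moreover have "f (axis Ei 1) = axis Ei 1"
  proof -
    have "qpair_aut (Q a b 0 0) r (axis Ei 1) = axis Ei 1"
      by (simp only: axis_ojoin qpair_aut_ojoin conj_action_fixes_i[OF q] mult_zero_left mult_zero_right)
    moreover have "cycle_ijl (cycle_ijl (axis Ei 1)) = axis El 1" "cycle_ijl (axis El 1) = axis Ei 1"
      by (simp_all add: oct_eq_iff cycle_ijl_nth axis_def)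
    moreover have "qpair_aut q' q' (axis El 1) = axis El 1"
      by (simp add: axis_ojoin qpair_aut_ojoin conj_action_fixes_real[OF q'])
    ultimately show ?thesis by (simp add: f_def)
  qed
  moreover have "oct_aut f"
    unfolding f_def by (intro oct_aut_comp oct_aut_qpair_aut oct_aut_cycle_ijl q q' r)
  ultimately show ?thesis
    by (intro exI[of _ f]) (auto simp: all_ob zero_quat_def)
qed

lemma exists_aut_to_ijkl_fixing_ij:
  assumes "ore z = 0"
  shows "\<exists>f. oct_aut f \<and> f (axis Ei 1) = axis Ei 1 \<and> f (axis Ej 1) = axis Ej 1 \<and>
    (\<forall>e. e \<notin> {Ei, Ej, Ek, El} \<longrightarrow> f z $ e = 0)"
proof -
  obtain r \<tau> where r: "qunit r" and hr: "r * otail z * qcnj 1 = Q \<tau> 0 0 0"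
    using exists_qunit_real_product[OF qunit_one] by blast
  have one: "qcnj 1 = 1" by (simp add: one_quat_def)
  have "qpair_aut 1 r z = ojoin (Q 0 (z$Ei) (z$Ej) (z$Ek)) (Q \<tau> 0 0 0)"
    using hr by (subst imaginary_ojoin[OF assms]) (simp add: qpair_aut_ojoin one)
  moreover have "qpair_aut 1 r (axis Ei 1) = axis Ei 1" "qpair_aut 1 r (axis Ej 1) = axis Ej 1"
    by (simp_all add: axis_ojoin qpair_aut_ojoin one)
  moreover have "oct_aut (qpair_aut 1 r)"
    by (intro oct_aut_qpair_aut r qunit_one)
  ultimately show ?thesis
    by (intro exI[of _ "qpair_aut 1 r"]) (auto simp: all_ob)
qed

lemma exists_aut_generic_form:
  assumes "ore x = 0" "ore y = 0" "ore z = 0"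
  shows "\<exists>f. oct_aut f \<and> generic_form (f x) (f y) (f z)"
proof -
  obtain f1 where f1: "oct_aut f1" and x1: "\<forall>e. e \<noteq> Ei \<longrightarrow> f1 x $ e = 0"
    using exists_aut_to_i[OF assms(1)] by blast
  obtain f2 where f2: "oct_aut f2" "f2 (axis Ei 1) = axis Ei 1"
    and y2: "\<forall>e. e \<notin> {Ei, Ej} \<longrightarrow> f2 (f1 y) $ e = 0"
    using exists_aut_to_ij_fixing_i[OF oct_aut_ore[OF f1 assms(2)]] by blast
  obtain f3 where f3: "oct_aut f3" "f3 (axis Ei 1) = axis Ei 1" "f3 (axis Ej 1) = axis Ej 1"
    and z3: "\<forall>e. e \<notin> {Ei, Ej, Ek, El} \<longrightarrow> f3 (f2 (f1 z)) $ e = 0"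
    using exists_aut_to_ijkl_fixing_ij[OF oct_aut_ore[OF f2(1) oct_aut_ore[OF f1 assms(3)]]] by blast
  have lin2: "linear f2" and lin3: "linear f3"
    using f2(1) f3(1) by (simp_all add: oct_aut_def)
  define c where "c = f1 x $ Ei"
  define c1 c2 where "c1 = f2 (f1 y) $ Ei" and "c2 = f2 (f1 y) $ Ej"
  have "f1 x = c *\<^sub>R axis Ei 1"
    using x1 by (simp add: c_def oct_eq_iff axis_def)
  then have "f3 (f2 (f1 x)) = c *\<^sub>R axis Ei 1"
    by (simp add: linear_scale[OF lin2] linear_scale[OF lin3] f2(2) f3(2))
  moreover have "f2 (f1 y) = c1 *\<^sub>R axis Ei 1 + c2 *\<^sub>R axis Ej 1"
    using y2 by (simp add: c1_def c2_def oct_eq_iff axis_def)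
  then have "f3 (f2 (f1 y)) = c1 *\<^sub>R axis Ei 1 + c2 *\<^sub>R axis Ej 1"
    by (simp add: linear_add[OF lin3] linear_scale[OF lin3] f3(2,3))
  ultimately have "generic_form ((f3 \<circ> f2 \<circ> f1) x) ((f3 \<circ> f2 \<circ> f1) y) ((f3 \<circ> f2 \<circ> f1) z)"
    using z3 by (simp add: generic_form_def axis_def)
  moreover have "oct_aut (f3 \<circ> f2 \<circ> f1)"
    by (intro oct_aut_comp f1 f2(1) f3(1))
  ultimately show ?thesis by blast
qed

section \<open>Transport of solutions along automorphisms\<close>

definition map_entries :: "(oct \<Rightarrow> oct) \<Rightarrow> hermitian \<Rightarrow> hermitian" where
  "map_entries f A = (case A of (p, m, n, a, b, c) \<Rightarrow> (p, m, n, f a, f b, f c))"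

lemma eigen_eq_oct_aut_iff:
  assumes f: "oct_aut f"
  shows "eigen_eq (p, m, n, f a, f b, f c) (f x) (f y) (f z) \<longleftrightarrow> eigen_eq (p, m, n, a, b, c) x y z"
proof -
  have lin: "linear f" and inj: "inj f" and mult: "\<And>u v. f (omul u v) = omul (f u) (f v)"
    and cnj: "\<And>u. f (ocnj u) = ocnj (f u)"
    using f by (auto simp: oct_aut_def bij_def)
  show ?thesis
    unfolding eigen_eq_def Let_def prod.case oct_aut_assoc[OF f, symmetric]
    by (simp add: inj_eq[OF inj] flip: mult cnj linear_add[OF lin] linear_scale[OF lin])
qed

lemma hsol_oct_aut:
  assumes f: "oct_aut f"
  shows "hsol (f x) (f y) (f z) = map_entries f ` hsol x y z"
proof
  show "map_entries f ` hsol x y z \<subseteq> hsol (f x) (f y) (f z)"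
    by (auto simp: hsol_def map_entries_def eigen_eq_oct_aut_iff[OF f] split: prod.splits)
  have surj: "surj f" using f by (simp add: oct_aut_def bij_def)
  show "hsol (f x) (f y) (f z) \<subseteq> map_entries f ` hsol x y z"
  proof
    fix A assume A: "A \<in> hsol (f x) (f y) (f z)"
    obtain p m n a b c where A_eq: "A = (p, m, n, a, b, c)" by (cases A)
    obtain a' b' c' where "a = f a'" "b = f b'" "c = f c'"
      using surj by (metis surjD)
    with A A_eq show "A \<in> map_entries f ` hsol x y z"
      by (auto simp: hsol_def map_entries_def eigen_eq_oct_aut_iff[OF f] intro!: image_eqI[of _ _ "(p, m, n, a', b', c')"])
  qed
qed

lemma aff_dim_hsol_oct_aut:
  assumes f: "oct_aut f"
  shows "aff_dim (hsol (f x) (f y) (f z)) = aff_dim (hsol x y z)"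
proof -
  have "linear (map_entries f)"
    using f unfolding oct_aut_def linear_iff map_entries_def by (auto split: prod.splits)
  moreover have "inj (map_entries f)"
    using f unfolding oct_aut_def bij_def inj_def map_entries_def by (auto split: prod.splits)
  ultimately show ?thesis
    unfolding hsol_oct_aut[OF f] by (rule aff_dim_injective_linear_image)
qed

theorem theorem2:
  fixes x y z :: oct
  assumes "ore x = 0" and "ore y = 0" and "ore z = 0"
    and "assoc x y z \<noteq> 0"
  shows "hsol x y z \<noteq> {} \<and> affine (hsol x y z) \<and> aff_dim (hsol x y z) = 6 \<and>
    ((\<forall>e. e \<noteq> Ei \<longrightarrow> x $ e = 0) \<and>
     (\<forall>e. e \<notin> {Ei, Ej} \<longrightarrow> y $ e = 0) \<and>
     (\<forall>e. e \<notin> {Ei, Ej, Ek, El} \<longrightarrow> z $ e = 0) \<longrightarrow>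
     (\<forall>p m n b1 b4 b7. \<exists>!A. A \<in> hsol x y z \<and>
        (case A of (p', m', n', a, b, c) \<Rightarrow>
          p' = p \<and> m' = m \<and> n' = n \<and> b $ E1 = b1 \<and> b $ Ek = b4 \<and> b $ Eil = b7)))"
proof -
  obtain f where f: "oct_aut f" and generic: "generic_form (f x) (f y) (f z)"
    using exists_aut_generic_form[OF assms(1-3)] by blast
  have "f (assoc x y z) \<noteq> 0"
    using f assms(4) unfolding oct_aut_def bij_def by (metis injD linear_0)
  then interpret fv: generic_triple "f x" "f y" "f z"
    using generic by unfold_locales (simp_all add: oct_aut_assoc[OF f])
  have dim: "aff_dim (hsol x y z) = 6"
    using fv.aff_dim_hsol aff_dim_hsol_oct_aut[OF f] by simp
  then have "hsol x y z \<noteq> {}" by auto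
  moreover have "\<exists>!A. A \<in> hsol x y z \<and> (case A of (p', m', n', a, b, c) \<Rightarrow>
      p' = p \<and> m' = m \<and> n' = n \<and> b $ E1 = b1 \<and> b $ Ek = b4 \<and> b $ Eil = b7)"
    if "generic_form x y z" for p m n b1 b4 b7
  proof -
    interpret generic_triple x y z using that assms(4) by unfold_locales
    show ?thesis using ex1_hsol unfolding free_params_eq_iff .
  qed
  ultimately show ?thesis
    using dim affine_hsol by (simp add: generic_form_def)
qed

end
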